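(* Let $\Gamma=(\rho_0,\dots,\rho_{n-1})$ be a context with every $\rho_k\in\mathrm{Type}^+\cup\mathrm{Type}^-$, let $\Gamma\vdash r:\rho$ be a typed term, $C=(i_0,\dots,i_{n-1})$ with $i_k\in I_{\rho_k}$, and $i\le i'$ in $I_\rho$ such that both state judgements $C\vdash r:i$ and $C\vdash r:i'$ are derivable. Then $\llbracket r\rrbracket^{i'}_{\vec a:C}\triangleright\llbracket r\rrbracket^{i}_{\vec a:C}$ for every $\vec a\in\llbracket\Gamma\rrbracket_C$.
   Context: Systems and factor systems: for a non-empty directed preordered set $I$, a system consists of pairwise disjoint sets $M_i$ ($i\in I$) and relations $\triangleright\subseteq M_{i'}\times M_i$ ($i\le i'$), reflexive for $i=i'$; $a_i\approx b_j$ iff some $c\in M_{i'}$, $i'\ge i,j$, has $c\triangleright a_i,c\triangleright b_j$; prefactor system: $a_{i'}\approx a_i\iff a_{i'}\triangleright a_i$. A factor system is a prefactor system with $\approx$-preserving $emb_{i,i'}:M_i\to M_{i'}$, $proj_{i',i}:M_{i'}\to M_i$ with $emb_{i,i}(a)\approx a$, $proj_{i,i}(a)\approx a$, $emb_{i',i''}\circ emb_{i,i'}(a)\approx emb_{i,i''}(a)$, $proj_{i',i}\circ proj_{i'',i'}(a)\approx proj_{i'',i}(a)$, $proj_{i',i}(emb_{i,i'}(a))\approx a$, and $a_{i'}\triangleright a_i\Rightarrow emb_{i',i''}(a_{i'})\triangleright a_i$, $a_{i''}\triangleright a_i\Rightarrow proj_{i'',i'}(a_{i''})\triangleright a_i$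 ($i\le i'\le i''$); it is direct iff $a_{i'}\triangleright a_i\iff a_{i'}\approx emb_{i,i'}(a_i)$. Filters: for each such $I$ a family $\mathcal F(I)$ of cofinal subsets, closed under supersets and finite intersections, containing all non-empty up-sets; standing Condition (D): $H\in\mathcal F(I\times J)$, $I'\in\mathcal F(I)$ imply $\{j\mid\exists i\in I',(i,j)\in H\}\in\mathcal F(J)$. A target for $M_I$: a set $M$ with relation $a\triangleright a_i$ with $\{i\mid\exists a_i,a\triangleright a_i\}\in\mathcal F(I)$ and $a\triangleright a_{i'},a\triangleright a_i\Rightarrow a_{i'}\triangleright a_i$; a limit is a target $M$ such that every target $N$ admits a unique $\Phi:N\to M$ with $b\triangleright a_i\Rightarrow\Phi(b)\triangleright a_i$. Function space $[M_I\to N_J]$: indices $i\to j\in I\times J$, states = $\approx$-preserving functions $M_i\to N_j$, $f'\triangleright f$ iff $a_{i'}\triangleright a_i\Rightarrow f'(a_{i'})\triangleright f(a_i)$, embeddings $f\mapsto emb_{j,j'}\circ f\circ proj_{i',i}$, projections $f'\mapsto proj_{j',j}\circ f'\circ emb_{i,i'}$. For targets: $[M\to_{\mathcal F}N]=\{f:M\to N\mid I_f\in\mathcal F(I\times J)\}$, $f\triangleright f_{i\to j}$ iff $a\triangleright a_i\Rightarrow f(a)\triangleright f_{i\to j}(a_i)$, $I_f=\{i\to j\mid\exists f_{i\to j},f\triangleright f_{i\to j}\}$. Types $\rho::=\iota\mid\rho\to\rho$ over base types including $\mathsf{prop}$; $\mathrm{Type}^+\ni\rho^+::=\iota\mid\rho^-\to\rho^+$,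 $\mathrm{Type}^-\ni\rho^-::=\mathsf{prop}\mid\rho^+\to\rho^-$. Index sets: non-empty directed $I_\rho$, $I_{\mathsf{prop}}=\{\mathsf{prop}\}$, $I_{\rho\to\sigma}=I_\rho\times I_\sigma$ (elements written $i\to j$). Interpretation of types: each $\rho$ gets a factor system $(\llbracket\rho\rrbracket_i)_{i\in I_\rho}$ and a limit $\llbracket\rho\rrbracket$; base types get direct factor systems; $\mathsf{prop}$ gets the one-index system with state $\{true,false\}$ and limit $\{true,false\}$, all relations being equality; $\rho\to\sigma$ gets the function space $[(\llbracket\rho\rrbracket_i)\to(\llbracket\sigma\rrbracket_j)]$ with limit $[\llbracket\rho\rrbracket\to_{\mathcal F}\llbracket\sigma\rrbracket]$. For $\Gamma=(\rho_0,\dots,\rho_{n-1})$ and $C=(i_0,\dots,i_{n-1})$: $\llbracket\Gamma\rrbracket_C=\prod_k\llbracket\rho_k\rrbracket_{i_k}$. Terms (variables $x_0,x_1,\dots$): $r::=x_k\mid rr\mid\lambda x_k^\rho r$. Typing: $\Gamma\vdash x_k:\rho_k$ ($k<n$); from $\Gamma\vdash r:\rho\to\sigma$, $\Gamma\vdash s:\rho$ infer $\Gamma\vdash rs:\sigma$; from $\Gamma.\rho\vdash r:\sigma$ (context extended by $\rho$ as $x_n$) infer $\Gamma\vdash\lambda x_n^\rho r:\rho\to\sigma$. State judgements: $C\vdash x_k:j$ if $\rho_k\in\mathrm{Type}^+$ and $j\ge i_k$, or if $\rho_k\in\mathrm{Type}^-$ and $j\le i_k$; from $C\vdash r:i\to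 j$ and $C\vdash s:i$ infer $C\vdash rs:j$; from $C.i\vdash r:j$ infer $C\vdash\lambda x_n^\rho r:i\to j$. State values, defined along the derivation of $C\vdash r:i$ for $\vec a\in\llbracket\Gamma\rrbracket_C$: $\llbracket x_k\rrbracket^j_{\vec a:C}=emb_{i_k,j}(a_k)$ if $\rho_k\in\mathrm{Type}^+$, $=proj_{i_k,j}(a_k)$ if $\rho_k\in\mathrm{Type}^-$; $\llbracket rs\rrbracket^j_{\vec a:C}=\llbracket r\rrbracket^{i\to j}_{\vec a:C}(\llbracket s\rrbracket^i_{\vec a:C})$; $\llbracket\lambda x_n^\rho r\rrbracket^{i\to j}_{\vec a:C}(b)=\llbracket r\rrbracket^j_{\vec a.b:C.i}$ for $b\in\llbracket\rho\rrbracket_i$. *)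

theory Defs
  imports "HOL-Library.FuncSet"
begin

text \<open>States M i are indexed
explicitly by their index, so pairwise disjointness of the M i is implicit.
The relation tri i' i a' a stands for a'_{i'} |> a_i (only meaningful for i <= i').\<close>

definition directed_preorder :: "'i set \<Rightarrow> ('i \<Rightarrow> 'i \<Rightarrow> bool) \<Rightarrow> bool" where
  "directed_preorder I le \<longleftrightarrow> I \<noteq> {} \<and> (\<forall>i\<in>I. le i i)
     \<and> (\<forall>i\<in>I. \<forall>j\<in>I. \<forall>k\<in>I. le i j \<longrightarrow> le j k \<longrightarrow> le i k)
     \<and> (\<forall>i\<in>I. \<forall>j\<in>I. \<exists>k\<in>I. le i k \<and> le j k)"

definition is_system :: "'i set \<Rightarrow> ('i \<Rightarrow> 'i \<Rightarrow> bool) \<Rightarrow> ('i \<Rightarrow> 'a set)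
    \<Rightarrow> ('i \<Rightarrow> 'i \<Rightarrow> 'a \<Rightarrow> 'a \<Rightarrow> bool) \<Rightarrow> bool" where
  "is_system I le M tri \<longleftrightarrow> directed_preorder I le
     \<and> (\<forall>i' i a' a. tri i' i a' a \<longrightarrow> i \<in> I \<and> i' \<in> I \<and> le i i' \<and> a' \<in> M i' \<and> a \<in> M i)
     \<and> (\<forall>i\<in>I. \<forall>a\<in>M i. tri i i a a)"

definition sys_sim :: "'i set \<Rightarrow> ('i \<Rightarrow> 'i \<Rightarrow> bool) \<Rightarrow> ('i \<Rightarrow> 'a set)
    \<Rightarrow> ('i \<Rightarrow> 'i \<Rightarrow> 'a \<Rightarrow> 'a \<Rightarrow> bool) \<Rightarrow> 'i \<Rightarrow> 'a \<Rightarrow> 'i \<Rightarrow> 'a \<Rightarrow> bool" where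
  "sys_sim I le M tri i a j b \<longleftrightarrow>
     (\<exists>k\<in>I. le i k \<and> le j k \<and> (\<exists>c\<in>M k. tri k i c a \<and> tri k j c b))"

definition is_prefactor_system :: "'i set \<Rightarrow> ('i \<Rightarrow> 'i \<Rightarrow> bool) \<Rightarrow> ('i \<Rightarrow> 'a set)
    \<Rightarrow> ('i \<Rightarrow> 'i \<Rightarrow> 'a \<Rightarrow> 'a \<Rightarrow> bool) \<Rightarrow> bool" where
  "is_prefactor_system I le M tri \<longleftrightarrow> is_system I le M tri
     \<and> (\<forall>i\<in>I. \<forall>i'\<in>I. le i i' \<longrightarrow> (\<forall>a'\<in>M i'. \<forall>a\<in>M i.
           sys_sim I le M tri i' a' i a \<longleftrightarrow> tri i' i a' a))"

definition is_factor_system :: "'i set \<Rightarrow> ('i \<Rightarrow> 'i \<Rightarrow> bool) \<Rightarrow> ('i \<Rightarrow> 'a set)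
    \<Rightarrow> ('i \<Rightarrow> 'i \<Rightarrow> 'a \<Rightarrow> 'a \<Rightarrow> bool)
    \<Rightarrow> ('i \<Rightarrow> 'i \<Rightarrow> 'a \<Rightarrow> 'a) \<Rightarrow> ('i \<Rightarrow> 'i \<Rightarrow> 'a \<Rightarrow> 'a) \<Rightarrow> bool" where
  "is_factor_system I le M tri emb proj \<longleftrightarrow> is_prefactor_system I le M tri
     \<and> (\<forall>i\<in>I. \<forall>i'\<in>I. le i i' \<longrightarrow>
          (\<forall>a\<in>M i. emb i i' a \<in> M i') \<and> (\<forall>a\<in>M i'. proj i' i a \<in> M i)
        \<and> (\<forall>a\<in>M i. \<forall>b\<in>M i. sys_sim I le M tri i a i b
              \<longrightarrow> sys_sim I le M tri i' (emb i i' a) i' (emb i i' b))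
        \<and> (\<forall>a\<in>M i'. \<forall>b\<in>M i'. sys_sim I le M tri i' a i' b
              \<longrightarrow> sys_sim I le M tri i (proj i' i a) i (proj i' i b))
        \<and> (\<forall>a\<in>M i. sys_sim I le M tri i (proj i' i (emb i i' a)) i a))
     \<and> (\<forall>i\<in>I. \<forall>a\<in>M i. sys_sim I le M tri i (emb i i a) i a
                        \<and> sys_sim I le M tri i (proj i i a) i a)
     \<and> (\<forall>i\<in>I. \<forall>i'\<in>I. \<forall>i''\<in>I. le i i' \<longrightarrow> le i' i'' \<longrightarrow>
          (\<forall>a\<in>M i. sys_sim I le M tri i'' (emb i' i'' (emb i i' a)) i'' (emb i i'' a))
        \<and> (\<forall>a\<in>M i''. sys_sim I le M tri i (proj i' i (proj i'' i' a)) i (proj i'' i a))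
        \<and> (\<forall>a'\<in>M i'. \<forall>a\<in>M i. tri i' i a' a \<longrightarrow> tri i'' i (emb i' i'' a') a)
        \<and> (\<forall>a''\<in>M i''. \<forall>a\<in>M i. tri i'' i a'' a \<longrightarrow> tri i' i (proj i'' i' a'') a))"

definition is_direct_factor_system :: "'i set \<Rightarrow> ('i \<Rightarrow> 'i \<Rightarrow> bool) \<Rightarrow> ('i \<Rightarrow> 'a set)
    \<Rightarrow> ('i \<Rightarrow> 'i \<Rightarrow> 'a \<Rightarrow> 'a \<Rightarrow> bool)
    \<Rightarrow> ('i \<Rightarrow> 'i \<Rightarrow> 'a \<Rightarrow> 'a) \<Rightarrow> ('i \<Rightarrow> 'i \<Rightarrow> 'a \<Rightarrow> 'a) \<Rightarrow> bool" where
  "is_direct_factor_system I le M tri emb proj \<longleftrightarrow> is_factor_system I le M tri emb proj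
     \<and> (\<forall>i\<in>I. \<forall>i'\<in>I. le i i' \<longrightarrow> (\<forall>a'\<in>M i'. \<forall>a\<in>M i.
           tri i' i a' a \<longleftrightarrow> sys_sim I le M tri i' a' i' (emb i i' a)))"

datatype 'bt ty = Prop | Base 'bt | Arr "'bt ty" "'bt ty"

fun pos :: "'bt ty \<Rightarrow> bool" and neg :: "'bt ty \<Rightarrow> bool" where
  "pos Prop = True"
| "pos (Base b) = True"
| "pos (Arr r s) = (neg r \<and> pos s)"
| "neg Prop = True"
| "neg (Base b) = False"
| "neg (Arr r s) = (pos r \<and> neg s)"

datatype 'ix idx = IProp | IB 'ix | IArr "'ix idx" "'ix idx"

datatype 'bt trm = Var nat | App "'bt trm" "'bt trm" | Lam nat "'bt ty" "'bt trm"

inductive typed :: "'bt ty list \<Rightarrow> 'bt trm \<Rightarrow> 'bt ty \<Rightarrow> bool" where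
  tVar: "k < length \<Gamma> \<Longrightarrow> typed \<Gamma> (Var k) (\<Gamma> ! k)"
| tApp: "typed \<Gamma> r (Arr \<rho> \<sigma>) \<Longrightarrow> typed \<Gamma> s \<rho> \<Longrightarrow> typed \<Gamma> (App r s) \<sigma>"
| tLam: "typed (\<Gamma> @ [\<rho>]) r \<sigma> \<Longrightarrow> typed \<Gamma> (Lam (length \<Gamma>) \<rho> r) (Arr \<rho> \<sigma>)"

text \<open>All states live in one universe type 'v.  A model fixes the base data (index sets,
direct factor systems), the two truth values, an application operator ap and the
state sets St; the state sets of function types are required to represent (via ap)
exactly the approx-preserving functions (see model_ok).\<close>

record ('bt, 'ix, 'v) model =
  BI :: "'bt \<Rightarrow> 'ix set"
  Ble :: "'bt \<Rightarrow> 'ix \<Rightarrow> 'ix \<Rightarrow> bool"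
  BSt :: "'bt \<Rightarrow> 'ix \<Rightarrow> 'v set"
  Btri :: "'bt \<Rightarrow> 'ix \<Rightarrow> 'ix \<Rightarrow> 'v \<Rightarrow> 'v \<Rightarrow> bool"
  Bemb :: "'bt \<Rightarrow> 'ix \<Rightarrow> 'ix \<Rightarrow> 'v \<Rightarrow> 'v"
  Bproj :: "'bt \<Rightarrow> 'ix \<Rightarrow> 'ix \<Rightarrow> 'v \<Rightarrow> 'v"
  vtrue :: 'v
  vfalse :: 'v
  ap :: "'v \<Rightarrow> 'v \<Rightarrow> 'v"
  St :: "'bt ty \<Rightarrow> 'ix idx \<Rightarrow> 'v set"

fun Idx :: "('bt, 'ix, 'v) model \<Rightarrow> 'bt ty \<Rightarrow> 'ix idx set" where
  "Idx M Prop = {IProp}"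
| "Idx M (Base b) = IB ` BI M b"
| "Idx M (Arr r s) = {IArr i j | i j. i \<in> Idx M r \<and> j \<in> Idx M s}"

fun le :: "('bt, 'ix, 'v) model \<Rightarrow> 'bt ty \<Rightarrow> 'ix idx \<Rightarrow> 'ix idx \<Rightarrow> bool" where
  "le M Prop IProp IProp = True"
| "le M (Base b) (IB x) (IB y) = Ble M b x y"
| "le M (Arr r s) (IArr i j) (IArr i' j') = (le M r i i' \<and> le M s j j')"
| "le M _ _ _ = False"

text \<open>tri M rho i' i a' a : a' (a state at index i') |> a (a state at index i).\<close>
fun tri :: "('bt, 'ix, 'v) model \<Rightarrow> 'bt ty \<Rightarrow> 'ix idx \<Rightarrow> 'ix idx \<Rightarrow> 'v \<Rightarrow> 'v \<Rightarrow> bool" where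
  "tri M Prop IProp IProp a' a = (a' = a)"
| "tri M (Base b) (IB x') (IB x) a' a = Btri M b x' x a' a"
| "tri M (Arr r s) (IArr i' j') (IArr i j) f' f =
     (\<forall>a'\<in>St M r i'. \<forall>a\<in>St M r i. tri M r i' i a' a \<longrightarrow> tri M s j' j (ap M f' a') (ap M f a))"
| "tri M _ _ _ _ _ = False"

definition sim :: "('bt, 'ix, 'v) model \<Rightarrow> 'bt ty \<Rightarrow> 'ix idx \<Rightarrow> 'v \<Rightarrow> 'ix idx \<Rightarrow> 'v \<Rightarrow> bool" where
  "sim M \<rho> i a j b \<longleftrightarrow> (\<exists>k\<in>Idx M \<rho>. le M \<rho> i k \<and> le M \<rho> j k
       \<and> (\<exists>c\<in>St M \<rho> k. tri M \<rho> k i c a \<and> tri M \<rho> k j c b))"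

fun emb :: "('bt, 'ix, 'v) model \<Rightarrow> 'bt ty \<Rightarrow> 'ix idx \<Rightarrow> 'ix idx \<Rightarrow> 'v \<Rightarrow> 'v"
and proj :: "('bt, 'ix, 'v) model \<Rightarrow> 'bt ty \<Rightarrow> 'ix idx \<Rightarrow> 'ix idx \<Rightarrow> 'v \<Rightarrow> 'v" where
  "emb M Prop i i' a = a"
| "emb M (Base b) (IB x) (IB x') a = Bemb M b x x' a"
| "emb M (Arr r s) (IArr i j) (IArr i' j') f =
     (THE f'. f' \<in> St M (Arr r s) (IArr i' j')
        \<and> (\<forall>x\<in>St M r i'. ap M f' x = emb M s j j' (ap M f (proj M r i' i x))))"
| "emb M (Base b) IProp _ a = a"
| "emb M (Base b) (IArr _ _) _ a = a"
| "emb M (Base b) (IB _) IProp a = a"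
| "emb M (Base b) (IB _) (IArr _ _) a = a"
| "emb M (Arr r s) IProp _ a = a"
| "emb M (Arr r s) (IB _) _ a = a"
| "emb M (Arr r s) (IArr _ _) IProp a = a"
| "emb M (Arr r s) (IArr _ _) (IB _) a = a"
| "proj M Prop i' i a = a"
| "proj M (Base b) (IB x') (IB x) a = Bproj M b x' x a"
| "proj M (Arr r s) (IArr i' j') (IArr i j) f' =
     (THE f. f \<in> St M (Arr r s) (IArr i j)
        \<and> (\<forall>x\<in>St M r i. ap M f x = proj M s j' j (ap M f' (emb M r i i' x))))"
| "proj M (Base b) IProp _ a = a"
| "proj M (Base b) (IArr _ _) _ a = a"
| "proj M (Base b) (IB _) IProp a = a"
| "proj M (Base b) (IB _) (IArr _ _) a = a"
| "proj M (Arr r s) IProp _ a = a"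
| "proj M (Arr r s) (IB _) _ a = a"
| "proj M (Arr r s) (IArr _ _) IProp a = a"
| "proj M (Arr r s) (IArr _ _) (IB _) a = a"

definition model_ok :: "('bt, 'ix, 'v) model \<Rightarrow> bool" where
  "model_ok M \<longleftrightarrow>
     (\<forall>b. is_direct_factor_system (BI M b) (Ble M b) (BSt M b) (Btri M b) (Bemb M b) (Bproj M b))
   \<and> vtrue M \<noteq> vfalse M
   \<and> St M Prop IProp = {vtrue M, vfalse M}
   \<and> (\<forall>b. \<forall>x\<in>BI M b. St M (Base b) (IB x) = BSt M b x)
   \<and> (\<forall>\<rho> \<sigma>. \<forall>i\<in>Idx M \<rho>. \<forall>j\<in>Idx M \<sigma>.
        bij_betw (\<lambda>v. restrict (ap M v) (St M \<rho> i)) (St M (Arr \<rho> \<sigma>) (IArr i j))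
          {f \<in> St M \<rho> i \<rightarrow>\<^sub>E St M \<sigma> j. \<forall>a\<in>St M \<rho> i. \<forall>b\<in>St M \<rho> i.
              sim M \<rho> i a i b \<longrightarrow> sim M \<sigma> j (f a) j (f b)})"

definition ctx_states :: "('bt, 'ix, 'v) model \<Rightarrow> 'bt ty list \<Rightarrow> 'ix idx list \<Rightarrow> 'v list set" where
  "ctx_states M \<Gamma> C = {as. length as = length \<Gamma> \<and> (\<forall>k<length \<Gamma>. as ! k \<in> St M (\<Gamma> ! k) (C ! k))}"

text \<open>sval M Gamma C r rho j F : there is a derivation of C |- r : j (r having type rho in Gamma),
and F maps each vector of states as in [[Gamma]]_C to the state value of r along that derivation.\<close>
inductive sval :: "('bt, 'ix, 'v) model \<Rightarrow> 'bt ty list \<Rightarrow> 'ix idx list \<Rightarrow> 'bt trm \<Rightarrow> 'bt ty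
    \<Rightarrow> 'ix idx \<Rightarrow> ('v list \<Rightarrow> 'v) \<Rightarrow> bool" for M where
  sVarPos: "k < length \<Gamma> \<Longrightarrow> pos (\<Gamma> ! k) \<Longrightarrow> j \<in> Idx M (\<Gamma> ! k) \<Longrightarrow> le M (\<Gamma> ! k) (C ! k) j
      \<Longrightarrow> sval M \<Gamma> C (Var k) (\<Gamma> ! k) j (\<lambda>as. emb M (\<Gamma> ! k) (C ! k) j (as ! k))"
| sVarNeg: "k < length \<Gamma> \<Longrightarrow> neg (\<Gamma> ! k) \<Longrightarrow> j \<in> Idx M (\<Gamma> ! k) \<Longrightarrow> le M (\<Gamma> ! k) j (C ! k)
      \<Longrightarrow> sval M \<Gamma> C (Var k) (\<Gamma> ! k) j (\<lambda>as. proj M (\<Gamma> ! k) (C ! k) j (as ! k))"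
| sApp: "sval M \<Gamma> C r (Arr \<rho> \<sigma>) (IArr i j) F \<Longrightarrow> sval M \<Gamma> C s \<rho> i G
      \<Longrightarrow> sval M \<Gamma> C (App r s) \<sigma> j (\<lambda>as. ap M (F as) (G as))"
| sLam: "i \<in> Idx M \<rho> \<Longrightarrow> sval M (\<Gamma> @ [\<rho>]) (C @ [i]) r \<sigma> j F
      \<Longrightarrow> sval M \<Gamma> C (Lam (length \<Gamma>) \<rho> r) (Arr \<rho> \<sigma>) (IArr i j)
            (\<lambda>as. THE v. v \<in> St M (Arr \<rho> \<sigma>) (IArr i j)
                     \<and> (\<forall>b\<in>St M \<rho> i. ap M v b = F (as @ [b])))"

end

theory Submission
  imports Defs
begin

text \<open>
  The proof is a logical-relations argument. A relation \<open>lrel\<close> between a state at index \<open>i\<close>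
  and a state at an arbitrary index \<open>i'\<close> is defined by recursion on the type: equality at
  \<open>prop\<close>, \<open>\<approx>\<close> at base types, and "related arguments to related results" at function types.
  By induction on types, for \<open>i \<le> i'\<close> it coincides with \<open>\<triangleright>\<close>, and it is reflexive, contains \<open>\<approx>\<close>
  and is respected by embeddings and projections in the directions that the polarity of the type
  permits; at base types this rests on the transitivity of \<open>\<approx>\<close> in direct factor systems.
  By induction on terms, two state judgements for the same term evaluated on related
  environments yield related values (the fundamental lemma). Relating an environment to
  itself, the values of \<open>r\<close> at \<open>i\<close> and at \<open>i'\<close> are related, which for \<open>i \<le> i'\<close> is \<open>\<triangleright>\<close>.
\<close>

section \<open>Direct factor systems\<close>

locale direct_factor_sys =
  fixes I :: "'i set" and L :: "'i \<Rightarrow> 'i \<Rightarrow> bool" and S :: "'i \<Rightarrow> 'a set"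
    and T :: "'i \<Rightarrow> 'i \<Rightarrow> 'a \<Rightarrow> 'a \<Rightarrow> bool"
    and E :: "'i \<Rightarrow> 'i \<Rightarrow> 'a \<Rightarrow> 'a" and P :: "'i \<Rightarrow> 'i \<Rightarrow> 'a \<Rightarrow> 'a"
  assumes direct_factor: "is_direct_factor_system I L S T E P"
begin

abbreviation approx :: "'i \<Rightarrow> 'a \<Rightarrow> 'i \<Rightarrow> 'a \<Rightarrow> bool" where
  "approx \<equiv> sys_sim I L S T"

lemma factor: "is_factor_system I L S T E P"
  using direct_factor unfolding is_direct_factor_system_def by blast

lemma prefactor: "is_prefactor_system I L S T"
  using factor unfolding is_factor_system_def by blast

lemma system: "is_system I L S T"
  using prefactor unfolding is_prefactor_system_def by blast

lemma L_refl: "i \<in> I \<Longrightarrow> L i i"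
  using system unfolding is_system_def directed_preorder_def by blast

lemma L_trans: "i \<in> I \<Longrightarrow> j \<in> I \<Longrightarrow> k \<in> I \<Longrightarrow> L i j \<Longrightarrow> L j k \<Longrightarrow> L i k"
  using system unfolding is_system_def directed_preorder_def by blast

lemma L_directed: "i \<in> I \<Longrightarrow> j \<in> I \<Longrightarrow> \<exists>k\<in>I. L i k \<and> L j k"
  using system unfolding is_system_def directed_preorder_def by blast

lemma T_refl: "i \<in> I \<Longrightarrow> a \<in> S i \<Longrightarrow> T i i a a"
  using system unfolding is_system_def by blast

lemma approx_sym: "approx i a j b \<Longrightarrow> approx j b i a"
  unfolding sys_sim_def by blast

lemma approx_iff_T:
  "i \<in> I \<Longrightarrow> i' \<in> I \<Longrightarrow> L i i' \<Longrightarrow> a' \<in> S i' \<Longrightarrow> a \<in> S i \<Longrightarrow> approx i' a' i a \<longleftrightarrow> T i' i a' a"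
  using prefactor unfolding is_prefactor_system_def by blast

lemma E_in: "i \<in> I \<Longrightarrow> i' \<in> I \<Longrightarrow> L i i' \<Longrightarrow> a \<in> S i \<Longrightarrow> E i i' a \<in> S i'"
  using factor unfolding is_factor_system_def by blast

lemma P_in: "i \<in> I \<Longrightarrow> i' \<in> I \<Longrightarrow> L i i' \<Longrightarrow> a \<in> S i' \<Longrightarrow> P i' i a \<in> S i"
  using factor unfolding is_factor_system_def by blast

lemma approx_E:
  "i \<in> I \<Longrightarrow> i' \<in> I \<Longrightarrow> L i i' \<Longrightarrow> a \<in> S i \<Longrightarrow> b \<in> S i \<Longrightarrow> approx i a i b
    \<Longrightarrow> approx i' (E i i' a) i' (E i i' b)"
  using factor unfolding is_factor_system_def by blast

lemma approx_P:
  "i \<in> I \<Longrightarrow> i' \<in> I \<Longrightarrow> L i i' \<Longrightarrow> a \<in> S i' \<Longrightarrow> b \<in> S i' \<Longrightarrow> approx i' a i' b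
    \<Longrightarrow> approx i (P i' i a) i (P i' i b)"
  using factor unfolding is_factor_system_def by blast

lemma T_E:
  "i \<in> I \<Longrightarrow> i' \<in> I \<Longrightarrow> i'' \<in> I \<Longrightarrow> L i i' \<Longrightarrow> L i' i'' \<Longrightarrow> a' \<in> S i' \<Longrightarrow> a \<in> S i
    \<Longrightarrow> T i' i a' a \<Longrightarrow> T i'' i (E i' i'' a') a"
  using factor unfolding is_factor_system_def by blast

lemma T_P:
  "i \<in> I \<Longrightarrow> i' \<in> I \<Longrightarrow> i'' \<in> I \<Longrightarrow> L i i' \<Longrightarrow> L i' i'' \<Longrightarrow> a'' \<in> S i'' \<Longrightarrow> a \<in> S i
    \<Longrightarrow> T i'' i a'' a \<Longrightarrow> T i' i (P i'' i' a'') a"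
  using factor unfolding is_factor_system_def by blast

lemma T_iff_approx_E:
  "i \<in> I \<Longrightarrow> i' \<in> I \<Longrightarrow> L i i' \<Longrightarrow> a' \<in> S i' \<Longrightarrow> a \<in> S i
    \<Longrightarrow> T i' i a' a \<longleftrightarrow> approx i' a' i' (E i i' a)"
  using direct_factor unfolding is_direct_factor_system_def by blast

lemma approx_refl: "i \<in> I \<Longrightarrow> a \<in> S i \<Longrightarrow> approx i a i a"
  unfolding sys_sim_def using L_refl T_refl by blast

lemma approx_trans_same_index:
  assumes n: "n \<in> I" and x: "x \<in> S n" and y: "y \<in> S n" and z: "z \<in> S n"
    and "approx n x n y" and "approx n y n z"
  shows "approx n x n z"
proof -
  have "T n n y x" and "T n n y z"
    using approx_iff_T[OF n n L_refl[OF n] y] x z assms(5,6) approx_sym by blast+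
  then show ?thesis unfolding sys_sim_def using n L_refl[OF n] y by blast
qed

text \<open>Both witnesses of \<open>\<approx>\<close> are embedded into a common upper bound, where directness turns
  each \<open>\<triangleright>\<close> into \<open>\<approx>\<close> at a single index; there \<open>\<approx>\<close> is transitive because the system is prefactor.\<close>

lemma approx_trans:
  assumes i: "i \<in> I" and j: "j \<in> I" and l: "l \<in> I"
    and a: "a \<in> S i" and b: "b \<in> S j" and c: "c \<in> S l"
    and ab: "approx i a j b" and bc: "approx j b l c"
  shows "approx i a l c"
proof -
  obtain k d where k: "k \<in> I" "L i k" "L j k" and d: "d \<in> S k" "T k i d a" "T k j d b"
    using ab unfolding sys_sim_def by blast
  obtain m e where m: "m \<in> I" "L j m" "L l m" and e: "e \<in> S m" "T m j e b" "T m l e c"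
    using bc unfolding sys_sim_def by blast
  obtain n where n: "n \<in> I" "L k n" "L m n" using L_directed[OF k(1) m(1)] by blast
  have L_n: "L i n" "L j n" "L l n"
    using L_trans[OF i k(1) n(1) k(2) n(2)] L_trans[OF j k(1) n(1) k(3) n(2)]
      L_trans[OF l m(1) n(1) m(3) n(3)] by auto
  define d' where "d' = E k n d"
  define e' where "e' = E m n e"
  have d': "d' \<in> S n" "T n i d' a" "T n j d' b"
    unfolding d'_def using E_in[OF k(1) n(1) n(2) d(1)]
      T_E[OF i k(1) n(1) k(2) n(2) d(1) a d(2)] T_E[OF j k(1) n(1) k(3) n(2) d(1) b d(3)] by auto
  have e': "e' \<in> S n" "T n j e' b" "T n l e' c"
    unfolding e'_def using E_in[OF m(1) n(1) n(3) e(1)]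
      T_E[OF j m(1) n(1) m(2) n(3) e(1) b e(2)] T_E[OF l m(1) n(1) m(3) n(3) e(1) c e(3)] by auto
  have Eb: "E j n b \<in> S n" and Ec: "E l n c \<in> S n"
    using E_in[OF j n(1) L_n(2) b] E_in[OF l n(1) L_n(3) c] .
  have "approx n d' n (E j n b)" "approx n e' n (E j n b)" "approx n e' n (E l n c)"
    using T_iff_approx_E[OF j n(1) L_n(2) _ b] T_iff_approx_E[OF l n(1) L_n(3) _ c] d' e' by blast+
  then have "approx n d' n (E l n c)"
    using approx_trans_same_index[OF n(1)] approx_sym d'(1) e'(1) Eb Ec by meson
  then have "T n l d' c" using T_iff_approx_E[OF l n(1) L_n(3) d'(1) c] by blast
  then show ?thesis unfolding sys_sim_def using n(1) L_n(1,3) d'(1,2) by blast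
qed

lemma approx_E_right:
  assumes "i \<in> I" "i' \<in> I" "i'' \<in> I" "L i i'" "L i' i''" "a \<in> S i" "a' \<in> S i'"
    and "approx i a i' a'"
  shows "approx i a i'' (E i' i'' a')"
proof -
  have "T i' i a' a" using approx_iff_T assms approx_sym by blast
  then have "T i'' i (E i' i'' a') a" using T_E assms by blast
  then show ?thesis using approx_iff_T E_in L_trans assms approx_sym by meson
qed

lemma approx_P_right:
  assumes "i \<in> I" "i' \<in> I" "i'' \<in> I" "L i i'" "L i' i''" "a \<in> S i" "a'' \<in> S i''"
    and "approx i a i'' a''"
  shows "approx i a i' (P i'' i' a'')"
proof -
  have "T i'' i a'' a" using approx_iff_T L_trans assms approx_sym by meson
  then have "T i' i (P i'' i' a'') a" using T_P assms by blast
  then show ?thesis using approx_iff_T P_in assms approx_sym by meson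
qed

lemma approx_E_E:
  assumes "i \<in> I" "i' \<in> I" "j \<in> I" "j' \<in> I" "L i i'" "L j j'" "a \<in> S i" "b \<in> S j"
    and "approx i a j b"
  shows "approx i' (E i i' a) j' (E j j' b)"
proof -
  have "approx i' (E i i' a) i a" "approx j b j' (E j j' b)"
    using approx_E_right[of i i i'] approx_E_right[of j j j'] approx_refl L_refl approx_sym assms
    by blast+
  then show ?thesis using approx_trans E_in assms by meson
qed

end

section \<open>States of function type\<close>

lemma sim_sym: "sim M \<rho> i a j b \<Longrightarrow> sim M \<rho> j b i a"
  unfolding sim_def by blast

lemma direct_factor_sys_Base:
  "model_ok M \<Longrightarrow> direct_factor_sys (BI M b) (Ble M b) (BSt M b) (Btri M b) (Bemb M b) (Bproj M b)"
  unfolding model_ok_def direct_factor_sys_def by blast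

lemma Idx_le_refl: "model_ok M \<Longrightarrow> i \<in> Idx M \<rho> \<Longrightarrow> le M \<rho> i i"
  by (induction \<rho> arbitrary: i) (auto intro: direct_factor_sys.L_refl[OF direct_factor_sys_Base])

lemma St_Base: "model_ok M \<Longrightarrow> x \<in> BI M b \<Longrightarrow> St M (Base b) (IB x) = BSt M b x"
  unfolding model_ok_def by blast

lemma sim_Base:
  "model_ok M \<Longrightarrow>
    sim M (Base b) (IB x) a (IB y) c \<longleftrightarrow> sys_sim (BI M b) (Ble M b) (BSt M b) (Btri M b) x a y c"
  unfolding sim_def sys_sim_def using St_Base by fastforce

lemma bij_ap_St_Arr:
  "model_ok M \<Longrightarrow> i \<in> Idx M r \<Longrightarrow> j \<in> Idx M s \<Longrightarrow>
   bij_betw (\<lambda>v. restrict (ap M v) (St M r i)) (St M (Arr r s) (IArr i j))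
     {f \<in> St M r i \<rightarrow>\<^sub>E St M s j. \<forall>a\<in>St M r i. \<forall>b\<in>St M r i. sim M r i a i b \<longrightarrow> sim M s j (f a) j (f b)}"
  unfolding model_ok_def by blast

text \<open>The state representing \<open>g\<close>; unspecified unless \<open>g\<close> maps \<open>St M r i\<close> to \<open>St M s j\<close>
  preserving \<open>\<approx>\<close>.\<close>

definition fun_state :: "('bt, 'ix, 'v) model \<Rightarrow> 'bt ty \<Rightarrow> 'bt ty \<Rightarrow> 'ix idx \<Rightarrow> 'ix idx
    \<Rightarrow> ('v \<Rightarrow> 'v) \<Rightarrow> 'v" where
  "fun_state M r s i j g = (THE v. v \<in> St M (Arr r s) (IArr i j) \<and> (\<forall>x\<in>St M r i. ap M v x = g x))"

context
  fixes M :: "('bt, 'ix, 'v) model" and r s :: "'bt ty" and i j :: "'ix idx"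
  assumes ok: "model_ok M" and i: "i \<in> Idx M r" and j: "j \<in> Idx M s"
begin

lemma ap_St:
  assumes "f \<in> St M (Arr r s) (IArr i j)" and "x \<in> St M r i"
  shows "ap M f x \<in> St M s j"
  using bij_betwE[OF bij_ap_St_Arr[OF ok i j]] assms by fastforce

lemma ap_sim:
  assumes "f \<in> St M (Arr r s) (IArr i j)" and "x \<in> St M r i" "y \<in> St M r i" "sim M r i x i y"
  shows "sim M s j (ap M f x) j (ap M f y)"
  using bij_betwE[OF bij_ap_St_Arr[OF ok i j]] assms by fastforce

lemma fun_state_unique:
  assumes "\<And>x. x \<in> St M r i \<Longrightarrow> g x \<in> St M s j"
    and "\<And>x y. x \<in> St M r i \<Longrightarrow> y \<in> St M r i \<Longrightarrow> sim M r i x i y \<Longrightarrow> sim M s j (g x) j (g y)"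
  shows "\<exists>!v. v \<in> St M (Arr r s) (IArr i j) \<and> (\<forall>x\<in>St M r i. ap M v x = g x)"
proof -
  note bij = bij_ap_St_Arr[OF ok i j]
  have "restrict g (St M r i) \<in> (\<lambda>v. restrict (ap M v) (St M r i)) ` St M (Arr r s) (IArr i j)"
    using assms bij_betw_imp_surj_on[OF bij] by auto
  then obtain v where v: "v \<in> St M (Arr r s) (IArr i j)"
      "restrict (ap M v) (St M r i) = restrict g (St M r i)"
    by auto
  show ?thesis
  proof (rule ex1I[of _ v])
    show "v \<in> St M (Arr r s) (IArr i j) \<and> (\<forall>x\<in>St M r i. ap M v x = g x)"
      using v by (metis restrict_apply')
  next
    fix w assume w: "w \<in> St M (Arr r s) (IArr i j) \<and> (\<forall>x\<in>St M r i. ap M w x = g x)"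
    then have "restrict (ap M w) (St M r i) = restrict (ap M v) (St M r i)"
      using v by (auto simp: restrict_def)
    then show "w = v" using bij w v(1) unfolding bij_betw_def inj_on_def by blast
  qed
qed

lemma
  assumes "\<And>x. x \<in> St M r i \<Longrightarrow> g x \<in> St M s j"
    and "\<And>x y. x \<in> St M r i \<Longrightarrow> y \<in> St M r i \<Longrightarrow> sim M r i x i y \<Longrightarrow> sim M s j (g x) j (g y)"
  shows fun_state_St: "fun_state M r s i j g \<in> St M (Arr r s) (IArr i j)"
    and ap_fun_state: "x \<in> St M r i \<Longrightarrow> ap M (fun_state M r s i j g) x = g x"
  using theI'[OF fun_state_unique[OF assms]] unfolding fun_state_def by auto

end

lemma emb_Arr_eq:
  "emb M (Arr r s) (IArr i j) (IArr i' j') f =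
    fun_state M r s i' j' (\<lambda>x. emb M s j j' (ap M f (proj M r i' i x)))"
  by (simp add: fun_state_def)

lemma proj_Arr_eq:
  "proj M (Arr r s) (IArr i' j') (IArr i j) f =
    fun_state M r s i j (\<lambda>x. proj M s j' j (ap M f (emb M r i i' x)))"
  by (simp add: fun_state_def)

declare emb.simps(3) [simp del] proj.simps(3) [simp del]

section \<open>The logical relation\<close>

text \<open>For \<open>i \<le> i'\<close>, \<open>lrel M \<rho> i a i' a'\<close> is \<open>a' \<triangleright> a\<close> (lemma \<open>tri_iff_lrel\<close>). It is needed for
  incomparable indices as well: under a \<open>\<lambda>\<close>, the two state judgements of the fundamental lemma
  extend the context by unrelated indices.\<close>

fun lrel :: "('bt, 'ix, 'v) model \<Rightarrow> 'bt ty \<Rightarrow> 'ix idx \<Rightarrow> 'v \<Rightarrow> 'ix idx \<Rightarrow> 'v \<Rightarrow> bool" where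
  "lrel M Prop IProp a IProp b = (a = b)"
| "lrel M (Base bt) (IB x) a (IB y) b = sim M (Base bt) (IB x) a (IB y) b"
| "lrel M (Arr r s) (IArr i j) f (IArr i' j') g =
     (\<forall>a\<in>St M r i. \<forall>b\<in>St M r i'. lrel M r i a i' b \<longrightarrow> lrel M s j (ap M f a) j' (ap M g b))"
| "lrel M _ _ _ _ _ = False"

lemma lrel_sym: "lrel M \<rho> i a j b \<Longrightarrow> lrel M \<rho> j b i a"
proof (induction \<rho> arbitrary: i a j b)
  case Prop
  then show ?case by (cases i; cases j) auto
next
  case (Base b)
  then show ?case by (cases i; cases j) (auto intro: sim_sym)
next
  case (Arr r s)
  then show ?case by (cases i; cases j) auto
qed

lemma tri_iff_lrel:
  assumes ok: "model_ok M"
  shows "i \<in> Idx M \<rho> \<Longrightarrow> i' \<in> Idx M \<rho> \<Longrightarrow> le M \<rho> i i' \<Longrightarrow> a \<in> St M \<rho> i \<Longrightarrow> a' \<in> St M \<rho> i'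
    \<Longrightarrow> tri M \<rho> i' i a' a \<longleftrightarrow> lrel M \<rho> i a i' a'"
proof (induction \<rho> arbitrary: i i' a a')
  case Prop
  then show ?case by auto
next
  case (Base b)
  interpret B: direct_factor_sys "BI M b" "Ble M b" "BSt M b" "Btri M b" "Bemb M b" "Bproj M b"
    using direct_factor_sys_Base[OF ok] .
  from Base obtain x x' where "i = IB x" "i' = IB x'" "x \<in> BI M b" "x' \<in> BI M b" by auto
  with Base show ?case
    using B.approx_iff_T[of x x' a' a] B.approx_sym St_Base[OF ok] sim_Base[OF ok] by auto
next
  case (Arr r s)
  from Arr.prems obtain i1 j1 i1' j1' where idx: "i = IArr i1 j1" "i' = IArr i1' j1'"
    "i1 \<in> Idx M r" "j1 \<in> Idx M s" "i1' \<in> Idx M r" "j1' \<in> Idx M s" by auto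
  with Arr.prems have le: "le M r i1 i1'" "le M s j1 j1'"
    and f: "a \<in> St M (Arr r s) (IArr i1 j1)" "a' \<in> St M (Arr r s) (IArr i1' j1')" by auto
  have "tri M s j1' j1 (ap M a' y) (ap M a x) \<longleftrightarrow> lrel M s j1 (ap M a x) j1' (ap M a' y)"
    if "x \<in> St M r i1" "y \<in> St M r i1'" for x y
    using Arr.IH(2)[OF idx(4,6) le(2)] ap_St[OF ok idx(3,4) f(1)] ap_St[OF ok idx(5,6) f(2)] that
    by blast
  moreover have "tri M r i1' i1 y x \<longleftrightarrow> lrel M r i1 x i1' y"
    if "x \<in> St M r i1" "y \<in> St M r i1'" for x y
    using Arr.IH(1)[OF idx(3,5) le(1)] that by blast
  ultimately show ?case unfolding idx by auto
qed

text \<open>Embeddings and projections at a function type conjugate a function by maps on arguments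
  and results; this is the common shape of all their compatibility properties with \<open>lrel\<close>.\<close>

lemma lrel_Arr_conjugate:
  assumes ok: "model_ok M" and idx: "i \<in> Idx M r" "j \<in> Idx M s" "i' \<in> Idx M r" "j' \<in> Idx M s"
    and f: "f \<in> St M (Arr r s) (IArr i j)" and g: "g \<in> St M (Arr r s) (IArr i' j')"
    and fg: "lrel M (Arr r s) (IArr i j) f (IArr i' j') g"
    and F: "\<And>x. x \<in> St M r k \<Longrightarrow> ap M F x = v (ap M f (u x))"
    and G: "\<And>y. y \<in> St M r k' \<Longrightarrow> ap M G y = v' (ap M g (u' y))"
    and u: "\<And>x. x \<in> St M r k \<Longrightarrow> u x \<in> St M r i"
    and u': "\<And>y. y \<in> St M r k' \<Longrightarrow> u' y \<in> St M r i'"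
    and uu': "\<And>x y. x \<in> St M r k \<Longrightarrow> y \<in> St M r k' \<Longrightarrow> lrel M r k x k' y
      \<Longrightarrow> lrel M r i (u x) i' (u' y)"
    and vv': "\<And>z w. z \<in> St M s j \<Longrightarrow> w \<in> St M s j' \<Longrightarrow> lrel M s j z j' w
      \<Longrightarrow> lrel M s l (v z) l' (v' w)"
  shows "lrel M (Arr r s) (IArr k l) F (IArr k' l') G"
  unfolding lrel.simps
proof (intro ballI impI)
  fix x y assume x: "x \<in> St M r k" and y: "y \<in> St M r k'" and xy: "lrel M r k x k' y"
  have "lrel M s j (ap M f (u x)) j' (ap M g (u' y))"
    using fg u[OF x] u'[OF y] uu'[OF x y xy] by simp
  then show "lrel M s l (ap M F x) l' (ap M G y)"
    using vv' ap_St[OF ok idx(1,2) f u[OF x]] ap_St[OF ok idx(3,4) g u'[OF y]] F[OF x] G[OF y] by simp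
qed

section \<open>Well-behaved types\<close>

text \<open>These invariants are proved simultaneously by induction on the type: at \<open>Arr r s\<close> each
  of them needs several of them at \<open>r\<close> and \<open>s\<close>, with embeddings and projections swapped on the
  argument side. The last one is needed because \<open>prop\<close>-only types are both positive and negative,
  so a variable of such a type may be embedded in one state judgement and projected in the other.\<close>

locale well_behaved_type =
  fixes M :: "('bt, 'ix, 'v) model" and \<rho> :: "'bt ty"
  assumes model_ok: "model_ok M"
    and lrel_refl: "i \<in> Idx M \<rho> \<Longrightarrow> a \<in> St M \<rho> i \<Longrightarrow> lrel M \<rho> i a i a"
    and sim_imp_lrel: "i \<in> Idx M \<rho> \<Longrightarrow> a \<in> St M \<rho> i \<Longrightarrow> b \<in> St M \<rho> i \<Longrightarrow> sim M \<rho> i a i b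
      \<Longrightarrow> lrel M \<rho> i a i b"
    and emb_St: "i \<in> Idx M \<rho> \<Longrightarrow> i' \<in> Idx M \<rho> \<Longrightarrow> le M \<rho> i i' \<Longrightarrow> a \<in> St M \<rho> i
      \<Longrightarrow> emb M \<rho> i i' a \<in> St M \<rho> i'"
    and proj_St: "i \<in> Idx M \<rho> \<Longrightarrow> i' \<in> Idx M \<rho> \<Longrightarrow> le M \<rho> i i' \<Longrightarrow> a \<in> St M \<rho> i'
      \<Longrightarrow> proj M \<rho> i' i a \<in> St M \<rho> i"
    and lrel_emb: "i \<in> Idx M \<rho> \<Longrightarrow> i' \<in> Idx M \<rho> \<Longrightarrow> le M \<rho> i i' \<Longrightarrow> a \<in> St M \<rho> i \<Longrightarrow> b \<in> St M \<rho> i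
      \<Longrightarrow> lrel M \<rho> i a i b \<Longrightarrow> lrel M \<rho> i' (emb M \<rho> i i' a) i' (emb M \<rho> i i' b)"
    and lrel_proj: "i \<in> Idx M \<rho> \<Longrightarrow> i' \<in> Idx M \<rho> \<Longrightarrow> le M \<rho> i i' \<Longrightarrow> a \<in> St M \<rho> i' \<Longrightarrow> b \<in> St M \<rho> i'
      \<Longrightarrow> lrel M \<rho> i' a i' b \<Longrightarrow> lrel M \<rho> i (proj M \<rho> i' i a) i (proj M \<rho> i' i b)"
    and lrel_emb_right: "i \<in> Idx M \<rho> \<Longrightarrow> i' \<in> Idx M \<rho> \<Longrightarrow> i'' \<in> Idx M \<rho> \<Longrightarrow> le M \<rho> i i'
      \<Longrightarrow> le M \<rho> i' i'' \<Longrightarrow> a \<in> St M \<rho> i \<Longrightarrow> a' \<in> St M \<rho> i'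
      \<Longrightarrow> lrel M \<rho> i a i' a' \<Longrightarrow> lrel M \<rho> i a i'' (emb M \<rho> i' i'' a')"
    and lrel_proj_right: "i \<in> Idx M \<rho> \<Longrightarrow> i' \<in> Idx M \<rho> \<Longrightarrow> i'' \<in> Idx M \<rho> \<Longrightarrow> le M \<rho> i i'
      \<Longrightarrow> le M \<rho> i' i'' \<Longrightarrow> a \<in> St M \<rho> i \<Longrightarrow> a'' \<in> St M \<rho> i''
      \<Longrightarrow> lrel M \<rho> i a i'' a'' \<Longrightarrow> lrel M \<rho> i a i' (proj M \<rho> i'' i' a'')"
    and pos_lrel_emb_emb: "pos \<rho> \<Longrightarrow> i \<in> Idx M \<rho> \<Longrightarrow> i' \<in> Idx M \<rho> \<Longrightarrow> j \<in> Idx M \<rho> \<Longrightarrow> j' \<in> Idx M \<rho>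
      \<Longrightarrow> le M \<rho> i i' \<Longrightarrow> le M \<rho> j j' \<Longrightarrow> a \<in> St M \<rho> i \<Longrightarrow> b \<in> St M \<rho> j
      \<Longrightarrow> lrel M \<rho> i a j b \<Longrightarrow> lrel M \<rho> i' (emb M \<rho> i i' a) j' (emb M \<rho> j j' b)"
    and neg_lrel_proj_proj: "neg \<rho> \<Longrightarrow> i \<in> Idx M \<rho> \<Longrightarrow> i' \<in> Idx M \<rho> \<Longrightarrow> j \<in> Idx M \<rho> \<Longrightarrow> j' \<in> Idx M \<rho>
      \<Longrightarrow> le M \<rho> i' i \<Longrightarrow> le M \<rho> j' j \<Longrightarrow> a \<in> St M \<rho> i \<Longrightarrow> b \<in> St M \<rho> j
      \<Longrightarrow> lrel M \<rho> i a j b \<Longrightarrow> lrel M \<rho> i' (proj M \<rho> i i' a) j' (proj M \<rho> j j' b)"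
    and pos_neg_lrel_emb_proj: "pos \<rho> \<Longrightarrow> neg \<rho> \<Longrightarrow> i \<in> Idx M \<rho> \<Longrightarrow> i' \<in> Idx M \<rho> \<Longrightarrow> j \<in> Idx M \<rho>
      \<Longrightarrow> j' \<in> Idx M \<rho> \<Longrightarrow> le M \<rho> i i' \<Longrightarrow> le M \<rho> j' j \<Longrightarrow> a \<in> St M \<rho> i \<Longrightarrow> b \<in> St M \<rho> j
      \<Longrightarrow> lrel M \<rho> i a j b \<Longrightarrow> lrel M \<rho> i' (emb M \<rho> i i' a) j' (proj M \<rho> j j' b)"
begin

lemma lrel_imp_sim:
  assumes i: "i \<in> Idx M \<rho>" and a: "a \<in> St M \<rho> i" and b: "b \<in> St M \<rho> i" and ab: "lrel M \<rho> i a i b"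
  shows "sim M \<rho> i a i b"
proof -
  note tri_iff = tri_iff_lrel[OF model_ok i i Idx_le_refl[OF model_ok i]]
  have "tri M \<rho> i i a a" and "tri M \<rho> i i a b"
    using tri_iff[OF a a] tri_iff[OF b a] lrel_refl[OF i a] lrel_sym[OF ab] by blast+
  then show ?thesis unfolding sim_def using i a Idx_le_refl[OF model_ok i] by blast
qed

end

lemma well_behaved_Prop: "model_ok M \<Longrightarrow> well_behaved_type M Prop"
  by unfold_locales (auto simp: sim_def)

lemma well_behaved_Base:
  assumes ok: "model_ok M"
  shows "well_behaved_type M (Base b)"
proof -
  interpret B: direct_factor_sys "BI M b" "Ble M b" "BSt M b" "Btri M b" "Bemb M b" "Bproj M b"
    using direct_factor_sys_Base[OF ok] .
  show ?thesis
    by unfold_locales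
      (auto simp: St_Base[OF ok] sim_Base[OF ok] ok
        intro: B.approx_refl B.E_in B.P_in B.approx_E B.approx_P B.approx_E_right B.approx_P_right B.approx_E_E)
qed

context
  fixes M :: "('bt, 'ix, 'v) model" and r s :: "'bt ty"
  assumes wb_r: "well_behaved_type M r" and wb_s: "well_behaved_type M s"
begin

interpretation r: well_behaved_type M r by (fact wb_r)
interpretation s: well_behaved_type M s by (fact wb_s)

lemma ap_lrel:
  assumes i: "i \<in> Idx M r" and j: "j \<in> Idx M s" and f: "f \<in> St M (Arr r s) (IArr i j)"
    and x: "x \<in> St M r i" and y: "y \<in> St M r i" and xy: "lrel M r i x i y"
  shows "lrel M s j (ap M f x) j (ap M f y)"
  using s.sim_imp_lrel[OF j ap_St[OF r.model_ok i j f x] ap_St[OF r.model_ok i j f y]]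
    ap_sim[OF r.model_ok i j f x y r.lrel_imp_sim[OF i x y xy]] .

lemma
  assumes i: "i \<in> Idx M r" and j: "j \<in> Idx M s"
    and g: "\<And>x. x \<in> St M r i \<Longrightarrow> g x \<in> St M s j"
    and g_lrel: "\<And>x y. x \<in> St M r i \<Longrightarrow> y \<in> St M r i \<Longrightarrow> lrel M r i x i y \<Longrightarrow> lrel M s j (g x) j (g y)"
  shows fun_state_St_lrel: "fun_state M r s i j g \<in> St M (Arr r s) (IArr i j)"
    and ap_fun_state_lrel: "x \<in> St M r i \<Longrightarrow> ap M (fun_state M r s i j g) x = g x"
proof -
  have "sim M s j (g x) j (g y)" if "x \<in> St M r i" "y \<in> St M r i" "sim M r i x i y" for x y
    using s.lrel_imp_sim[OF j g g g_lrel[OF _ _ r.sim_imp_lrel[OF i]]] that by blast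
  then show "fun_state M r s i j g \<in> St M (Arr r s) (IArr i j)"
    and "x \<in> St M r i \<Longrightarrow> ap M (fun_state M r s i j g) x = g x"
    using fun_state_St[where g = g, OF r.model_ok i j g] ap_fun_state[where g = g, OF r.model_ok i j g]
    by blast+
qed

lemma lrel_fun_state:
  assumes idx: "i \<in> Idx M r" "j \<in> Idx M s" "i' \<in> Idx M r" "j' \<in> Idx M s"
    and g: "\<And>x y. x \<in> St M r i \<Longrightarrow> y \<in> St M r i \<Longrightarrow> lrel M r i x i y
      \<Longrightarrow> g x \<in> St M s j \<and> g y \<in> St M s j \<and> lrel M s j (g x) j (g y)"
    and g': "\<And>x y. x \<in> St M r i' \<Longrightarrow> y \<in> St M r i' \<Longrightarrow> lrel M r i' x i' y
      \<Longrightarrow> g' x \<in> St M s j' \<and> g' y \<in> St M s j' \<and> lrel M s j' (g' x) j' (g' y)"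
    and gg': "\<And>x y. x \<in> St M r i \<Longrightarrow> y \<in> St M r i' \<Longrightarrow> lrel M r i x i' y \<Longrightarrow> lrel M s j (g x) j' (g' y)"
  shows "fun_state M r s i j g \<in> St M (Arr r s) (IArr i j)
    \<and> fun_state M r s i' j' g' \<in> St M (Arr r s) (IArr i' j')
    \<and> lrel M (Arr r s) (IArr i j) (fun_state M r s i j g) (IArr i' j') (fun_state M r s i' j' g')"
proof -
  have g_St: "\<And>x. x \<in> St M r i \<Longrightarrow> g x \<in> St M s j"
    and g'_St: "\<And>y. y \<in> St M r i' \<Longrightarrow> g' y \<in> St M s j'"
    using g g' r.lrel_refl idx(1,3) by blast+
  have g_lrel: "\<And>x y. x \<in> St M r i \<Longrightarrow> y \<in> St M r i \<Longrightarrow> lrel M r i x i y \<Longrightarrow> lrel M s j (g x) j (g y)"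
    and g'_lrel: "\<And>x y. x \<in> St M r i' \<Longrightarrow> y \<in> St M r i' \<Longrightarrow> lrel M r i' x i' y
      \<Longrightarrow> lrel M s j' (g' x) j' (g' y)"
    using g g' by blast+
  show ?thesis
    using gg' fun_state_St_lrel[where g = g, OF idx(1,2) g_St g_lrel]
      fun_state_St_lrel[where g = g', OF idx(3,4) g'_St g'_lrel]
      ap_fun_state_lrel[where g = g, OF idx(1,2) g_St g_lrel]
      ap_fun_state_lrel[where g = g', OF idx(3,4) g'_St g'_lrel] by simp
qed

context
  fixes i j i' j' :: "'ix idx"
  assumes idx: "i \<in> Idx M r" "j \<in> Idx M s" "i' \<in> Idx M r" "j' \<in> Idx M s"
    and le: "le M r i i'" "le M s j j'"
begin

lemma
  assumes f: "f \<in> St M (Arr r s) (IArr i j)"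
  shows emb_Arr_St: "emb M (Arr r s) (IArr i j) (IArr i' j') f \<in> St M (Arr r s) (IArr i' j')"
    and ap_emb_Arr: "x \<in> St M r i'
      \<Longrightarrow> ap M (emb M (Arr r s) (IArr i j) (IArr i' j') f) x = emb M s j j' (ap M f (proj M r i' i x))"
proof -
  let ?g = "\<lambda>x. emb M s j j' (ap M f (proj M r i' i x))"
  have g: "?g x \<in> St M s j'" if "x \<in> St M r i'" for x
    using s.emb_St[OF idx(2,4) le(2) ap_St[OF r.model_ok idx(1,2) f r.proj_St[OF idx(1,3) le(1) that]]]
    .
  have "lrel M s j' (?g x) j' (?g y)"
    if "x \<in> St M r i'" "y \<in> St M r i'" "lrel M r i' x i' y" for x y
    using s.lrel_emb[OF idx(2,4) le(2)] ap_St[OF r.model_ok idx(1,2) f] ap_lrel[OF idx(1,2) f]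
      r.proj_St[OF idx(1,3) le(1)] r.lrel_proj[OF idx(1,3) le(1)] that by simp
  then show "emb M (Arr r s) (IArr i j) (IArr i' j') f \<in> St M (Arr r s) (IArr i' j')"
    and "x \<in> St M r i' \<Longrightarrow> ap M (emb M (Arr r s) (IArr i j) (IArr i' j') f) x = ?g x"
    unfolding emb_Arr_eq
    using fun_state_St_lrel[where g = ?g, OF idx(3,4) g] ap_fun_state_lrel[where g = ?g, OF idx(3,4) g]
    by blast+
qed

lemma
  assumes f: "f \<in> St M (Arr r s) (IArr i' j')"
  shows proj_Arr_St: "proj M (Arr r s) (IArr i' j') (IArr i j) f \<in> St M (Arr r s) (IArr i j)"
    and ap_proj_Arr: "x \<in> St M r i
      \<Longrightarrow> ap M (proj M (Arr r s) (IArr i' j') (IArr i j) f) x = proj M s j' j (ap M f (emb M r i i' x))"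
proof -
  let ?g = "\<lambda>x. proj M s j' j (ap M f (emb M r i i' x))"
  have g: "?g x \<in> St M s j" if "x \<in> St M r i" for x
    using s.proj_St[OF idx(2,4) le(2) ap_St[OF r.model_ok idx(3,4) f r.emb_St[OF idx(1,3) le(1) that]]]
    .
  have "lrel M s j (?g x) j (?g y)"
    if "x \<in> St M r i" "y \<in> St M r i" "lrel M r i x i y" for x y
    using s.lrel_proj[OF idx(2,4) le(2)] ap_St[OF r.model_ok idx(3,4) f] ap_lrel[OF idx(3,4) f]
      r.emb_St[OF idx(1,3) le(1)] r.lrel_emb[OF idx(1,3) le(1)] that by simp
  then show "proj M (Arr r s) (IArr i' j') (IArr i j) f \<in> St M (Arr r s) (IArr i j)"
    and "x \<in> St M r i \<Longrightarrow> ap M (proj M (Arr r s) (IArr i' j') (IArr i j) f) x = ?g x"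
    unfolding proj_Arr_eq
    using fun_state_St_lrel[where g = ?g, OF idx(1,2) g] ap_fun_state_lrel[where g = ?g, OF idx(1,2) g]
    by blast+
qed

end


lemma lrel_Arr_refl:
  "i \<in> Idx M r \<Longrightarrow> j \<in> Idx M s \<Longrightarrow> f \<in> St M (Arr r s) (IArr i j)
    \<Longrightarrow> lrel M (Arr r s) (IArr i j) f (IArr i j) f"
  using ap_lrel by auto

lemma sim_imp_lrel_Arr:
  assumes i: "i \<in> Idx M r" and j: "j \<in> Idx M s"
    and f: "f \<in> St M (Arr r s) (IArr i j)" and g: "g \<in> St M (Arr r s) (IArr i j)"
    and fg: "sim M (Arr r s) (IArr i j) f (IArr i j) g"
  shows "lrel M (Arr r s) (IArr i j) f (IArr i j) g"
  unfolding lrel.simps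
proof (intro ballI impI)
  obtain k l c where kl: "k \<in> Idx M r" "l \<in> Idx M s" "le M r i k" "le M s j l"
    and c: "c \<in> St M (Arr r s) (IArr k l)"
      "tri M (Arr r s) (IArr k l) (IArr i j) c f" "tri M (Arr r s) (IArr k l) (IArr i j) c g"
    using fg unfolding sim_def by auto
  fix a b assume a: "a \<in> St M r i" and b: "b \<in> St M r i" and ab: "lrel M r i a i b"
  define z where "z = emb M r i k a"
  have z: "z \<in> St M r k" unfolding z_def using r.emb_St[OF i kl(1,3) a] .
  have "lrel M r i a k z" "lrel M r i b k z"
    unfolding z_def using r.lrel_emb_right[OF i i kl(1) Idx_le_refl[OF r.model_ok i] kl(3)] a b
      r.lrel_refl[OF i a] lrel_sym[OF ab] by blast+
  then have "tri M r k i z a" "tri M r k i z b"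
    using tri_iff_lrel[OF r.model_ok i kl(1,3)] a b z by blast+
  then have "tri M s l j (ap M c z) (ap M f a)" "tri M s l j (ap M c z) (ap M g b)"
    using c a b z by auto
  then have "sim M s j (ap M f a) j (ap M g b)"
    unfolding sim_def using kl(2,4) ap_St[OF r.model_ok kl(1,2) c(1) z] by blast
  then show "lrel M s j (ap M f a) j (ap M g b)"
    using s.sim_imp_lrel[OF j ap_St[OF r.model_ok i j f a] ap_St[OF r.model_ok i j g b]] by blast
qed

lemma lrel_emb_Arr:
  assumes idx: "i \<in> Idx M r" "j \<in> Idx M s" "i' \<in> Idx M r" "j' \<in> Idx M s"
    and le: "le M r i i'" "le M s j j'"
    and f: "f \<in> St M (Arr r s) (IArr i j)" and g: "g \<in> St M (Arr r s) (IArr i j)"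
    and fg: "lrel M (Arr r s) (IArr i j) f (IArr i j) g"
  shows "lrel M (Arr r s) (IArr i' j') (emb M (Arr r s) (IArr i j) (IArr i' j') f)
                          (IArr i' j') (emb M (Arr r s) (IArr i j) (IArr i' j') g)"
  by (rule lrel_Arr_conjugate[where u = "proj M r i' i" and u' = "proj M r i' i"
        and v = "emb M s j j'" and v' = "emb M s j j'", OF r.model_ok idx(1,2,1,2) f g fg])
    (use idx le in \<open>auto simp: ap_emb_Arr f g intro: r.proj_St r.lrel_proj s.lrel_emb\<close>)


lemma lrel_proj_Arr:
  assumes idx: "i \<in> Idx M r" "j \<in> Idx M s" "i' \<in> Idx M r" "j' \<in> Idx M s"
    and le: "le M r i i'" "le M s j j'"
    and f: "f \<in> St M (Arr r s) (IArr i' j')" and g: "g \<in> St M (Arr r s) (IArr i' j')"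
    and fg: "lrel M (Arr r s) (IArr i' j') f (IArr i' j') g"
  shows "lrel M (Arr r s) (IArr i j) (proj M (Arr r s) (IArr i' j') (IArr i j) f)
                          (IArr i j) (proj M (Arr r s) (IArr i' j') (IArr i j) g)"
  by (rule lrel_Arr_conjugate[where u = "emb M r i i'" and u' = "emb M r i i'"
        and v = "proj M s j' j" and v' = "proj M s j' j", OF r.model_ok idx(3,4,3,4) f g fg])
    (use idx le in \<open>auto simp: ap_proj_Arr f g intro: r.emb_St r.lrel_emb s.lrel_proj\<close>)

lemma lrel_emb_right_Arr:
  assumes idx: "i \<in> Idx M r" "j \<in> Idx M s" "i' \<in> Idx M r" "j' \<in> Idx M s"
      "i'' \<in> Idx M r" "j'' \<in> Idx M s"
    and le: "le M r i i'" "le M s j j'" "le M r i' i''" "le M s j' j''"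
    and f: "f \<in> St M (Arr r s) (IArr i j)" and g: "g \<in> St M (Arr r s) (IArr i' j')"
    and fg: "lrel M (Arr r s) (IArr i j) f (IArr i' j') g"
  shows "lrel M (Arr r s) (IArr i j) f (IArr i'' j'') (emb M (Arr r s) (IArr i' j') (IArr i'' j'') g)"
  by (rule lrel_Arr_conjugate[where u = id and u' = "proj M r i'' i'"
        and v = id and v' = "emb M s j' j''", OF r.model_ok idx(1-4) f g fg])
    (use idx le in \<open>auto simp: ap_emb_Arr g intro: r.proj_St r.lrel_proj_right s.lrel_emb_right\<close>)

lemma lrel_proj_right_Arr:
  assumes idx: "i \<in> Idx M r" "j \<in> Idx M s" "i' \<in> Idx M r" "j' \<in> Idx M s"
      "i'' \<in> Idx M r" "j'' \<in> Idx M s"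
    and le: "le M r i i'" "le M s j j'" "le M r i' i''" "le M s j' j''"
    and f: "f \<in> St M (Arr r s) (IArr i j)" and g: "g \<in> St M (Arr r s) (IArr i'' j'')"
    and fg: "lrel M (Arr r s) (IArr i j) f (IArr i'' j'') g"
  shows "lrel M (Arr r s) (IArr i j) f (IArr i' j') (proj M (Arr r s) (IArr i'' j'') (IArr i' j') g)"
  by (rule lrel_Arr_conjugate[where u = id and u' = "emb M r i' i''"
        and v = id and v' = "proj M s j'' j'", OF r.model_ok idx(1,2,5,6) f g fg])
    (use idx le in \<open>auto simp: ap_proj_Arr g intro: r.emb_St r.lrel_emb_right s.lrel_proj_right\<close>)

lemma pos_lrel_emb_emb_Arr:
  assumes "pos (Arr r s)"
    and idx: "i1 \<in> Idx M r" "j1 \<in> Idx M s" "i2 \<in> Idx M r" "j2 \<in> Idx M s"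
      "i1' \<in> Idx M r" "j1' \<in> Idx M s" "i2' \<in> Idx M r" "j2' \<in> Idx M s"
    and le: "le M r i1 i1'" "le M s j1 j1'" "le M r i2 i2'" "le M s j2 j2'"
    and f: "f \<in> St M (Arr r s) (IArr i1 j1)" and g: "g \<in> St M (Arr r s) (IArr i2 j2)"
    and fg: "lrel M (Arr r s) (IArr i1 j1) f (IArr i2 j2) g"
  shows "lrel M (Arr r s) (IArr i1' j1') (emb M (Arr r s) (IArr i1 j1) (IArr i1' j1') f)
                          (IArr i2' j2') (emb M (Arr r s) (IArr i2 j2) (IArr i2' j2') g)"
  using assms(1)
  by (intro lrel_Arr_conjugate[where u = "proj M r i1' i1" and u' = "proj M r i2' i2"
        and v = "emb M s j1 j1'" and v' = "emb M s j2 j2'", OF r.model_ok idx(1-4) f g fg])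
    (use idx le in \<open>auto simp: ap_emb_Arr f g intro: r.proj_St r.neg_lrel_proj_proj s.pos_lrel_emb_emb\<close>)

lemma neg_lrel_proj_proj_Arr:
  assumes "neg (Arr r s)"
    and idx: "i1 \<in> Idx M r" "j1 \<in> Idx M s" "i2 \<in> Idx M r" "j2 \<in> Idx M s"
      "i1' \<in> Idx M r" "j1' \<in> Idx M s" "i2' \<in> Idx M r" "j2' \<in> Idx M s"
    and le: "le M r i1' i1" "le M s j1' j1" "le M r i2' i2" "le M s j2' j2"
    and f: "f \<in> St M (Arr r s) (IArr i1 j1)" and g: "g \<in> St M (Arr r s) (IArr i2 j2)"
    and fg: "lrel M (Arr r s) (IArr i1 j1) f (IArr i2 j2) g"
  shows "lrel M (Arr r s) (IArr i1' j1') (proj M (Arr r s) (IArr i1 j1) (IArr i1' j1') f)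
                          (IArr i2' j2') (proj M (Arr r s) (IArr i2 j2) (IArr i2' j2') g)"
  using assms(1)
  by (intro lrel_Arr_conjugate[where u = "emb M r i1' i1" and u' = "emb M r i2' i2"
        and v = "proj M s j1 j1'" and v' = "proj M s j2 j2'", OF r.model_ok idx(1-4) f g fg])
    (use idx le in \<open>auto simp: ap_proj_Arr f g intro: r.emb_St r.pos_lrel_emb_emb s.neg_lrel_proj_proj\<close>)

lemma pos_neg_lrel_emb_proj_Arr:
  assumes "pos (Arr r s)" "neg (Arr r s)"
    and idx: "i1 \<in> Idx M r" "j1 \<in> Idx M s" "i2 \<in> Idx M r" "j2 \<in> Idx M s"
      "i1' \<in> Idx M r" "j1' \<in> Idx M s" "i2' \<in> Idx M r" "j2' \<in> Idx M s"
    and le: "le M r i1 i1'" "le M s j1 j1'" "le M r i2' i2" "le M s j2' j2"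
    and f: "f \<in> St M (Arr r s) (IArr i1 j1)" and g: "g \<in> St M (Arr r s) (IArr i2 j2)"
    and fg: "lrel M (Arr r s) (IArr i1 j1) f (IArr i2 j2) g"
  shows "lrel M (Arr r s) (IArr i1' j1') (emb M (Arr r s) (IArr i1 j1) (IArr i1' j1') f)
                          (IArr i2' j2') (proj M (Arr r s) (IArr i2 j2) (IArr i2' j2') g)"
proof (rule lrel_Arr_conjugate[where u = "proj M r i1' i1" and u' = "emb M r i2' i2"
      and v = "emb M s j1 j1'" and v' = "proj M s j2 j2'", OF r.model_ok idx(1-4) f g fg])
  fix x y assume x: "x \<in> St M r i1'" and y: "y \<in> St M r i2'" and xy: "lrel M r i1' x i2' y"
  have "pos r" "neg r" using assms(1,2) by auto
  then have "lrel M r i2 (emb M r i2' i2 y) i1 (proj M r i1' i1 x)"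
    using r.pos_neg_lrel_emb_proj[OF _ _ idx(7,3,5,1) le(3,1) y x lrel_sym[OF xy]] by simp
  then show "lrel M r i1 (proj M r i1' i1 x) i2 (emb M r i2' i2 y)"
    by (rule lrel_sym)
qed (use assms(1,2) idx le in \<open>auto simp: ap_emb_Arr ap_proj_Arr f g
      intro: r.proj_St r.emb_St s.pos_neg_lrel_emb_proj\<close>)


lemma well_behaved_Arr: "well_behaved_type M (Arr r s)"
  by unfold_locales
    (auto intro: r.model_ok lrel_Arr_refl sim_imp_lrel_Arr emb_Arr_St proj_Arr_St
      lrel_emb_Arr lrel_proj_Arr lrel_emb_right_Arr lrel_proj_right_Arr pos_lrel_emb_emb_Arr neg_lrel_proj_proj_Arr
      pos_neg_lrel_emb_proj_Arr)

end

lemma model_ok_well_behaved: "model_ok M \<Longrightarrow> well_behaved_type M \<rho>"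
  by (induction \<rho>) (auto intro: well_behaved_Prop well_behaved_Base well_behaved_Arr)

section \<open>The fundamental lemma\<close>

definition ctx_index :: "('bt, 'ix, 'v) model \<Rightarrow> 'bt ty list \<Rightarrow> 'ix idx list \<Rightarrow> bool" where
  "ctx_index M \<Gamma> C \<longleftrightarrow> length C = length \<Gamma> \<and> (\<forall>k<length \<Gamma>. C ! k \<in> Idx M (\<Gamma> ! k))"

definition ctx_lrel :: "('bt, 'ix, 'v) model \<Rightarrow> 'bt ty list \<Rightarrow> 'ix idx list \<Rightarrow> 'v list
    \<Rightarrow> 'ix idx list \<Rightarrow> 'v list \<Rightarrow> bool" where
  "ctx_lrel M \<Gamma> C as C' as' \<longleftrightarrow> (\<forall>k<length \<Gamma>. lrel M (\<Gamma> ! k) (C ! k) (as ! k) (C' ! k) (as' ! k))"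

lemma ctx_index_snoc: "ctx_index M \<Gamma> C \<Longrightarrow> i \<in> Idx M \<tau> \<Longrightarrow> ctx_index M (\<Gamma> @ [\<tau>]) (C @ [i])"
  unfolding ctx_index_def by (auto simp: nth_append less_Suc_eq)

lemma ctx_states_snoc:
  "ctx_index M \<Gamma> C \<Longrightarrow> as \<in> ctx_states M \<Gamma> C \<Longrightarrow> b \<in> St M \<tau> i \<Longrightarrow> as @ [b] \<in> ctx_states M (\<Gamma> @ [\<tau>]) (C @ [i])"
  unfolding ctx_index_def ctx_states_def by (auto simp: nth_append less_Suc_eq)

lemma ctx_lrel_snoc:
  "ctx_index M \<Gamma> C \<Longrightarrow> ctx_index M \<Gamma> C' \<Longrightarrow> as \<in> ctx_states M \<Gamma> C \<Longrightarrow> as' \<in> ctx_states M \<Gamma> C'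
    \<Longrightarrow> ctx_lrel M \<Gamma> C as C' as' \<Longrightarrow> lrel M \<tau> i b i' b'
    \<Longrightarrow> ctx_lrel M (\<Gamma> @ [\<tau>]) (C @ [i]) (as @ [b]) (C' @ [i']) (as' @ [b'])"
  unfolding ctx_index_def ctx_states_def ctx_lrel_def by (auto simp: nth_append less_Suc_eq)

lemma ctx_lrel_refl:
  "model_ok M \<Longrightarrow> ctx_index M \<Gamma> C \<Longrightarrow> as \<in> ctx_states M \<Gamma> C \<Longrightarrow> ctx_lrel M \<Gamma> C as C as"
  unfolding ctx_index_def ctx_states_def ctx_lrel_def
  by (simp add: well_behaved_type.lrel_refl[OF model_ok_well_behaved])

inductive_cases sval_VarE: "sval M \<Gamma> C (Var k) \<rho> j F"
inductive_cases sval_AppE: "sval M \<Gamma> C (App r s) \<rho> j F"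
inductive_cases sval_LamE: "sval M \<Gamma> C (Lam n \<tau> r) \<rho> j F"

lemma sval_Idx: "sval M \<Gamma> C t \<rho> i F \<Longrightarrow> i \<in> Idx M \<rho>"
  by (induction rule: sval.induct) auto

lemma sval_type_unique: "sval M \<Gamma> C t \<rho> i F \<Longrightarrow> sval M \<Gamma> C' t \<rho>' i' F' \<Longrightarrow> \<rho> = \<rho>'"
proof (induction arbitrary: C' \<rho>' i' F' rule: sval.induct)
  case (sApp \<Gamma> C r \<rho> \<sigma> i j F s G)
  from sApp.prems show ?case
    by (rule sval_AppE) (use sApp.IH(1) in fastforce)
next
  case (sLam i \<rho> \<Gamma> C r \<sigma> j F)
  from sLam.prems show ?case
    by (rule sval_LamE) (use sLam.IH in fastforce)
qed (auto elim: sval_VarE)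

lemma sval_Var_cases:
  assumes "sval M \<Gamma> C (Var k) \<rho> i F"
  shows "k < length \<Gamma> \<and> \<rho> = \<Gamma> ! k \<and> i \<in> Idx M \<rho>
    \<and> (pos \<rho> \<and> le M \<rho> (C ! k) i \<and> F = (\<lambda>as. emb M \<rho> (C ! k) i (as ! k))
      \<or> neg \<rho> \<and> le M \<rho> i (C ! k) \<and> F = (\<lambda>as. proj M \<rho> (C ! k) i (as ! k)))"
  using assms by (auto elim: sval_VarE)

definition lrel_term :: "('bt, 'ix, 'v) model \<Rightarrow> 'bt ty list \<Rightarrow> 'bt trm \<Rightarrow> bool" where
  "lrel_term M \<Gamma> t \<longleftrightarrow> (\<forall>C C' \<rho> i i' F F' as as'.
     sval M \<Gamma> C t \<rho> i F \<longrightarrow> sval M \<Gamma> C' t \<rho> i' F' \<longrightarrow> ctx_index M \<Gamma> C \<longrightarrow> ctx_index M \<Gamma> C'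
     \<longrightarrow> as \<in> ctx_states M \<Gamma> C \<longrightarrow> as' \<in> ctx_states M \<Gamma> C' \<longrightarrow> ctx_lrel M \<Gamma> C as C' as'
     \<longrightarrow> F as \<in> St M \<rho> i \<and> F' as' \<in> St M \<rho> i' \<and> lrel M \<rho> i (F as) i' (F' as'))"

lemma lrel_termD:
  "lrel_term M \<Gamma> t \<Longrightarrow> sval M \<Gamma> C t \<rho> i F \<Longrightarrow> sval M \<Gamma> C' t \<rho> i' F'
    \<Longrightarrow> ctx_index M \<Gamma> C \<Longrightarrow> ctx_index M \<Gamma> C' \<Longrightarrow> as \<in> ctx_states M \<Gamma> C \<Longrightarrow> as' \<in> ctx_states M \<Gamma> C'
    \<Longrightarrow> ctx_lrel M \<Gamma> C as C' as'
    \<Longrightarrow> F as \<in> St M \<rho> i \<and> F' as' \<in> St M \<rho> i' \<and> lrel M \<rho> i (F as) i' (F' as')"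
  unfolding lrel_term_def by blast

lemma lrel_term_Var:
  assumes ok: "model_ok M"
  shows "lrel_term M \<Gamma> (Var k)"
  unfolding lrel_term_def
proof (intro allI impI)
  fix C C' \<rho> i i' F F' as as'
  assume F: "sval M \<Gamma> C (Var k) \<rho> i F" and F': "sval M \<Gamma> C' (Var k) \<rho> i' F'"
    and C: "ctx_index M \<Gamma> C" and C': "ctx_index M \<Gamma> C'"
    and as: "as \<in> ctx_states M \<Gamma> C" and as': "as' \<in> ctx_states M \<Gamma> C'"
    and rel: "ctx_lrel M \<Gamma> C as C' as'"
  from sval_Var_cases[OF F] have k: "k < length \<Gamma>" by blast
  interpret wb: well_behaved_type M "\<Gamma> ! k" using model_ok_well_behaved[OF ok] .
  have c: "C ! k \<in> Idx M (\<Gamma> ! k)" "C' ! k \<in> Idx M (\<Gamma> ! k)"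
    and a: "as ! k \<in> St M (\<Gamma> ! k) (C ! k)" "as' ! k \<in> St M (\<Gamma> ! k) (C' ! k)"
    and a_rel: "lrel M (\<Gamma> ! k) (C ! k) (as ! k) (C' ! k) (as' ! k)"
    using C C' as as' rel k unfolding ctx_index_def ctx_states_def ctx_lrel_def by auto
  from sval_Var_cases[OF F] sval_Var_cases[OF F']
  show "F as \<in> St M \<rho> i \<and> F' as' \<in> St M \<rho> i' \<and> lrel M \<rho> i (F as) i' (F' as')"
    using c a a_rel
      lrel_sym[OF wb.pos_neg_lrel_emb_proj[OF _ _ c(2) _ c(1) _ _ _ a(2,1) lrel_sym[OF a_rel]]]
    by (auto simp: wb.emb_St wb.proj_St wb.pos_lrel_emb_emb wb.neg_lrel_proj_proj
        wb.pos_neg_lrel_emb_proj)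
qed

lemma lrel_term_App:
  assumes ok: "model_ok M" and t: "lrel_term M \<Gamma> t" and u: "lrel_term M \<Gamma> u"
  shows "lrel_term M \<Gamma> (App t u)"
  unfolding lrel_term_def
proof (intro allI impI)
  fix C C' \<rho> i i' F F' as as'
  assume F: "sval M \<Gamma> C (App t u) \<rho> i F" and F': "sval M \<Gamma> C' (App t u) \<rho> i' F'"
    and ctx: "ctx_index M \<Gamma> C" "ctx_index M \<Gamma> C'" "as \<in> ctx_states M \<Gamma> C" "as' \<in> ctx_states M \<Gamma> C'"
      "ctx_lrel M \<Gamma> C as C' as'"
  from F obtain \<sigma> j G H where F: "F = (\<lambda>as. ap M (G as) (H as))"
    and G: "sval M \<Gamma> C t (Arr \<sigma> \<rho>) (IArr j i) G" and H: "sval M \<Gamma> C u \<sigma> j H"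
    by (elim sval_AppE) blast
  from F' obtain \<sigma>' j' G' H' where F': "F' = (\<lambda>as. ap M (G' as) (H' as))"
    and G': "sval M \<Gamma> C' t (Arr \<sigma>' \<rho>) (IArr j' i') G'" and H': "sval M \<Gamma> C' u \<sigma>' j' H'"
    by (elim sval_AppE) blast
  have "\<sigma>' = \<sigma>" using sval_type_unique[OF G G'] by simp
  with G' H' have G': "sval M \<Gamma> C' t (Arr \<sigma> \<rho>) (IArr j' i') G'" and H': "sval M \<Gamma> C' u \<sigma> j' H'"
    by simp_all
  have "j \<in> Idx M \<sigma>" "i \<in> Idx M \<rho>" "j' \<in> Idx M \<sigma>" "i' \<in> Idx M \<rho>"
    using sval_Idx[OF G] sval_Idx[OF G'] by auto
  then show "F as \<in> St M \<rho> i \<and> F' as' \<in> St M \<rho> i' \<and> lrel M \<rho> i (F as) i' (F' as')"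
    using lrel_termD[OF t G G' ctx] lrel_termD[OF u H H' ctx] F F' ap_St[OF ok] by auto
qed

lemma lrel_term_Lam:
  assumes ok: "model_ok M" and t: "lrel_term M (\<Gamma> @ [\<tau>]) t"
  shows "lrel_term M \<Gamma> (Lam n \<tau> t)"
  unfolding lrel_term_def
proof (intro allI impI)
  fix C C' \<rho> i i' F F' as as'
  assume F: "sval M \<Gamma> C (Lam n \<tau> t) \<rho> i F" and F': "sval M \<Gamma> C' (Lam n \<tau> t) \<rho> i' F'"
    and C: "ctx_index M \<Gamma> C" and C': "ctx_index M \<Gamma> C'"
    and as: "as \<in> ctx_states M \<Gamma> C" and as': "as' \<in> ctx_states M \<Gamma> C'"
    and rel: "ctx_lrel M \<Gamma> C as C' as'"
  from F obtain \<sigma> k j G where \<rho>: "\<rho> = Arr \<tau> \<sigma>" and i: "i = IArr k j" and k: "k \<in> Idx M \<tau>"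
    and G: "sval M (\<Gamma> @ [\<tau>]) (C @ [k]) t \<sigma> j G"
    and F: "F as = fun_state M \<tau> \<sigma> k j (\<lambda>b. G (as @ [b]))"
    by (elim sval_LamE) (auto simp: fun_state_def)
  from F' obtain k' j' G' where i': "i' = IArr k' j'" and k': "k' \<in> Idx M \<tau>"
    and G': "sval M (\<Gamma> @ [\<tau>]) (C' @ [k']) t \<sigma> j' G'"
    and F': "F' as' = fun_state M \<tau> \<sigma> k' j' (\<lambda>b. G' (as' @ [b]))"
    unfolding \<rho> by (elim sval_LamE) (auto simp: fun_state_def)
  have j: "j \<in> Idx M \<sigma>" "j' \<in> Idx M \<sigma>" using sval_Idx G G' by blast+
  have body: "Ga (asa @ [b]) \<in> St M \<sigma> ja \<and> Gb (asb @ [b']) \<in> St M \<sigma> jb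
      \<and> lrel M \<sigma> ja (Ga (asa @ [b])) jb (Gb (asb @ [b']))"
    if "sval M (\<Gamma> @ [\<tau>]) (Ca @ [ka]) t \<sigma> ja Ga" "sval M (\<Gamma> @ [\<tau>]) (Cb @ [kb]) t \<sigma> jb Gb"
      "ctx_index M \<Gamma> Ca" "ctx_index M \<Gamma> Cb"
      "asa \<in> ctx_states M \<Gamma> Ca" "asb \<in> ctx_states M \<Gamma> Cb" "ctx_lrel M \<Gamma> Ca asa Cb asb"
      "ka \<in> Idx M \<tau>" "kb \<in> Idx M \<tau>" "b \<in> St M \<tau> ka" "b' \<in> St M \<tau> kb" "lrel M \<tau> ka b kb b'"
    for Ca Cb ka kb ja jb Ga Gb asa asb b b'
    using lrel_termD[OF t that(1,2) ctx_index_snoc[OF that(3,8)] ctx_index_snoc[OF that(4,9)]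
        ctx_states_snoc[OF that(3,5,10)] ctx_states_snoc[OF that(4,6,11)]
        ctx_lrel_snoc[OF that(3-7,12)]] .
  have refl: "ctx_lrel M \<Gamma> C as C as" "ctx_lrel M \<Gamma> C' as' C' as'"
    using ctx_lrel_refl[OF ok] C C' as as' by blast+
  note wb = model_ok_well_behaved[OF ok]
  show "F as \<in> St M \<rho> i \<and> F' as' \<in> St M \<rho> i' \<and> lrel M \<rho> i (F as) i' (F' as')"
    unfolding F F' \<rho> i i'
    by (rule lrel_fun_state[OF wb wb k j(1) k' j(2)])
      (use body[OF G G C C as as refl(1) k k] body[OF G' G' C' C' as' as' refl(2) k' k']
        body[OF G G' C C' as as' rel k k'] in blast)+
qed

lemma lrel_term: "model_ok M \<Longrightarrow> lrel_term M \<Gamma> t"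
  by (induction t arbitrary: \<Gamma>) (auto intro: lrel_term_Var lrel_term_App lrel_term_Lam)

theorem corollary3p10:
  fixes M :: "('bt, 'ix, 'v) model"
  assumes "model_ok M"
    and "\<forall>k<length \<Gamma>. pos (\<Gamma> ! k) \<or> neg (\<Gamma> ! k)"
    and "typed \<Gamma> r \<rho>"
    and "length C = length \<Gamma>" and "\<forall>k<length \<Gamma>. C ! k \<in> Idx M (\<Gamma> ! k)"
    and "i \<in> Idx M \<rho>" and "i' \<in> Idx M \<rho>" and "le M \<rho> i i'"
    and "sval M \<Gamma> C r \<rho> i F" and "sval M \<Gamma> C r \<rho> i' F'"
    and "as \<in> ctx_states M \<Gamma> C"
  shows "tri M \<rho> i' i (F' as) (F as)"
proof -
  have C: "ctx_index M \<Gamma> C" using assms(4,5) unfolding ctx_index_def by blast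
  have "F as \<in> St M \<rho> i" "F' as \<in> St M \<rho> i'" "lrel M \<rho> i (F as) i' (F' as)"
    using lrel_termD[OF lrel_term assms(9,10) C C assms(11,11) ctx_lrel_refl[OF assms(1) C assms(11)]]
      assms(1) by blast+
  then show ?thesis using tri_iff_lrel[OF assms(1,6,7,8)] by blast
qed

end
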